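(* For every $\rho$-bialgebra $(X,a,c)$ of a higher-order GSOS law $\rho$ of $\Sigma$ over $B$, the underlying $\Sigma$-algebra $(X,a)$ is adequate: if $\llbracket-\rrbracket\colon\mu\Sigma\to X$ is the unique $\Sigma$-algebra morphism from the initial algebra and $\mathsf{beh}\colon\mu\Sigma\to\nu B(\mu\Sigma,-)$ is the unique $B(\mu\Sigma,-)$-coalgebra morphism from $(\mu\Sigma,\gamma)$ to the final $B(\mu\Sigma,-)$-coalgebra, then there exists a morphism $k\colon X\to\nu B(\mu\Sigma,-)$ in $\mathcal{C}$ with $k\cdot\llbracket-\rrbracket=\mathsf{beh}$.
   Context: Let $\mathcal{C}$ be a category with binary products and binary coproducts (pairing $\langle f,g\rangle$, copairing $[f,g]$, codiagonal $\nabla=[\mathrm{id},\mathrm{id}]$). Let $\Sigma\colon\mathcal{C}\to\mathcal{C}$ be an endofunctor with an initial algebra $(\mu\Sigma,\iota)$ and a free $\Sigma$-algebra $(\Sigma^\star X,\iota_X)$ with unit $\eta_X$ on every object $X$; for a $\Sigma$-algebra $(A,a)$ write $\hat a\colon\Sigma^\star A\to A$ for the unique algebra morphism with $\hat a\cdot\eta_A=\mathrm{id}_A$. Let $B\colon\mathcal{C}^{op}\times\mathcal{C}\to\mathcal{C}$ be a bifunctor such that for every object $X$ the endofunctor $B(X,-)$ has a final coalgebra, denoted $\nu B(X,-)$. A higher-order GSOS law is a family $\rho_{X,Y}\colon\Sigma(X\times B(X,Y))\to B(X,\Sigma^\star(X+Y))$ dinatural in $X$ and natural in $Y$. Its operational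 model is the unique $\gamma\colon\mu\Sigma\to B(\mu\Sigma,\mu\Sigma)$ with $\gamma\cdot\iota=B(\mathrm{id},\hat\iota\cdot\Sigma^\star\nabla)\cdot\rho_{\mu\Sigma,\mu\Sigma}\cdot\Sigma\langle\mathrm{id},\gamma\rangle$. A $\rho$-bialgebra is a triple $(X,a,c)$ with $a\colon\Sigma X\to X$, $c\colon X\to B(X,X)$ such that $c\cdot a=B(\mathrm{id},\hat a\cdot\Sigma^\star\nabla)\cdot\rho_{X,X}\cdot\Sigma\langle\mathrm{id},c\rangle$. *)

theory Defs
  imports Main
begin

section \<open>Categories (objects = all elements of type 'o, arrows = elements of 'm satisfying Arr)\<close>

record ('o,'m) cat =
  Arr :: "'m \<Rightarrow> bool"
  Dom :: "'m \<Rightarrow> 'o"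
  Cod :: "'m \<Rightarrow> 'o"
  Idm :: "'o \<Rightarrow> 'm"
  Cmp :: "'m \<Rightarrow> 'm \<Rightarrow> 'm"   (* Cmp C g f = g . f *)

definition hom :: "('o,'m) cat \<Rightarrow> 'o \<Rightarrow> 'o \<Rightarrow> 'm set" where
  "hom C X Y = {f. Arr C f \<and> Dom C f = X \<and> Cod C f = Y}"

definition category :: "('o,'m) cat \<Rightarrow> bool" where
  "category C \<longleftrightarrow>
     (\<forall>X. Idm C X \<in> hom C X X) \<and>
     (\<forall>f g X Y Z. f \<in> hom C X Y \<longrightarrow> g \<in> hom C Y Z \<longrightarrow> Cmp C g f \<in> hom C X Z) \<and>
     (\<forall>f X Y. f \<in> hom C X Y \<longrightarrow> Cmp C f (Idm C X) = f \<and> Cmp C (Idm C Y) f = f) \<and>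
     (\<forall>f g h W X Y Z. f \<in> hom C W X \<longrightarrow> g \<in> hom C X Y \<longrightarrow> h \<in> hom C Y Z \<longrightarrow>
        Cmp C h (Cmp C g f) = Cmp C (Cmp C h g) f)"

record ('o,'m) endo =
  FO :: "'o \<Rightarrow> 'o"
  FM :: "'m \<Rightarrow> 'm"

definition endofunctor :: "('o,'m) cat \<Rightarrow> ('o,'m) endo \<Rightarrow> bool" where
  "endofunctor C F \<longleftrightarrow>
     (\<forall>f X Y. f \<in> hom C X Y \<longrightarrow> FM F f \<in> hom C (FO F X) (FO F Y)) \<and>
     (\<forall>X. FM F (Idm C X) = Idm C (FO F X)) \<and>
     (\<forall>f g X Y Z. f \<in> hom C X Y \<longrightarrow> g \<in> hom C Y Z \<longrightarrow>
        FM F (Cmp C g f) = Cmp C (FM F g) (FM F f))"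

record ('o,'m) bif =
  BO :: "'o \<Rightarrow> 'o \<Rightarrow> 'o"
  BM :: "'m \<Rightarrow> 'm \<Rightarrow> 'm"

text \<open>Contravariant in the first, covariant in the second argument:
  for f : X' -> X and g : Y -> Y', BM f g : B(X,Y) -> B(X',Y').\<close>
definition bifunctor :: "('o,'m) cat \<Rightarrow> ('o,'m) bif \<Rightarrow> bool" where
  "bifunctor C B \<longleftrightarrow>
     (\<forall>f g X X' Y Y'. f \<in> hom C X' X \<longrightarrow> g \<in> hom C Y Y' \<longrightarrow>
        BM B f g \<in> hom C (BO B X Y) (BO B X' Y')) \<and>
     (\<forall>X Y. BM B (Idm C X) (Idm C Y) = Idm C (BO B X Y)) \<and>
     (\<forall>f f' g g' X X' X'' Y Y' Y''. f \<in> hom C X' X \<longrightarrow> f' \<in> hom C X'' X' \<longrightarrow>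
        g \<in> hom C Y Y' \<longrightarrow> g' \<in> hom C Y' Y'' \<longrightarrow>
        BM B (Cmp C f f') (Cmp C g' g) = Cmp C (BM B f' g') (BM B f g))"

record ('o,'m) prods =
  Pr :: "'o \<Rightarrow> 'o \<Rightarrow> 'o"
  P1 :: "'o \<Rightarrow> 'o \<Rightarrow> 'm"
  P2 :: "'o \<Rightarrow> 'o \<Rightarrow> 'm"
  Pair :: "'m \<Rightarrow> 'm \<Rightarrow> 'm"

definition binary_products :: "('o,'m) cat \<Rightarrow> ('o,'m) prods \<Rightarrow> bool" where
  "binary_products C P \<longleftrightarrow> (\<forall>X Y.
     P1 P X Y \<in> hom C (Pr P X Y) X \<and> P2 P X Y \<in> hom C (Pr P X Y) Y \<and>
     (\<forall>Z f g. f \<in> hom C Z X \<longrightarrow> g \<in> hom C Z Y \<longrightarrow>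
        Pair P f g \<in> hom C Z (Pr P X Y) \<and>
        Cmp C (P1 P X Y) (Pair P f g) = f \<and> Cmp C (P2 P X Y) (Pair P f g) = g \<and>
        (\<forall>h \<in> hom C Z (Pr P X Y). Cmp C (P1 P X Y) h = f \<and> Cmp C (P2 P X Y) h = g
            \<longrightarrow> h = Pair P f g)))"

record ('o,'m) coprods =
  Cp :: "'o \<Rightarrow> 'o \<Rightarrow> 'o"
  In1 :: "'o \<Rightarrow> 'o \<Rightarrow> 'm"
  In2 :: "'o \<Rightarrow> 'o \<Rightarrow> 'm"
  Copair :: "'m \<Rightarrow> 'm \<Rightarrow> 'm"

definition binary_coproducts :: "('o,'m) cat \<Rightarrow> ('o,'m) coprods \<Rightarrow> bool" where
  "binary_coproducts C Q \<longleftrightarrow> (\<forall>X Y.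
     In1 Q X Y \<in> hom C X (Cp Q X Y) \<and> In2 Q X Y \<in> hom C Y (Cp Q X Y) \<and>
     (\<forall>Z f g. f \<in> hom C X Z \<longrightarrow> g \<in> hom C Y Z \<longrightarrow>
        Copair Q f g \<in> hom C (Cp Q X Y) Z \<and>
        Cmp C (Copair Q f g) (In1 Q X Y) = f \<and> Cmp C (Copair Q f g) (In2 Q X Y) = g \<and>
        (\<forall>h \<in> hom C (Cp Q X Y) Z. Cmp C h (In1 Q X Y) = f \<and> Cmp C h (In2 Q X Y) = g
            \<longrightarrow> h = Copair Q f g)))"

definition prodm :: "('o,'m) cat \<Rightarrow> ('o,'m) prods \<Rightarrow> 'm \<Rightarrow> 'm \<Rightarrow> 'm" where
  "prodm C P f g = Pair P (Cmp C f (P1 P (Dom C f) (Dom C g))) (Cmp C g (P2 P (Dom C f) (Dom C g)))"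

definition coprodm :: "('o,'m) cat \<Rightarrow> ('o,'m) coprods \<Rightarrow> 'm \<Rightarrow> 'm \<Rightarrow> 'm" where
  "coprodm C Q f g = Copair Q (Cmp C (In1 Q (Cod C f) (Cod C g)) f) (Cmp C (In2 Q (Cod C f) (Cod C g)) g)"

definition codiag :: "('o,'m) cat \<Rightarrow> ('o,'m) coprods \<Rightarrow> 'o \<Rightarrow> 'm" where
  "codiag C Q X = Copair Q (Idm C X) (Idm C X)"

definition alg_hom :: "('o,'m) cat \<Rightarrow> ('o,'m) endo \<Rightarrow> 'o \<Rightarrow> 'm \<Rightarrow> 'o \<Rightarrow> 'm \<Rightarrow> 'm \<Rightarrow> bool" where
  "alg_hom C S A a A' a' h \<longleftrightarrow> h \<in> hom C A A' \<and> Cmp C h a = Cmp C a' (FM S h)"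

definition initial_alg :: "('o,'m) cat \<Rightarrow> ('o,'m) endo \<Rightarrow> 'o \<Rightarrow> 'm \<Rightarrow> bool" where
  "initial_alg C S mu i \<longleftrightarrow> i \<in> hom C (FO S mu) mu \<and>
     (\<forall>A a. a \<in> hom C (FO S A) A \<longrightarrow> (\<exists>!h. alg_hom C S mu i A a h))"

record ('o,'m) freealg =
  FT :: "'o \<Rightarrow> 'o"
  FI :: "'o \<Rightarrow> 'm"
  FE :: "'o \<Rightarrow> 'm"

definition free_algs :: "('o,'m) cat \<Rightarrow> ('o,'m) endo \<Rightarrow> ('o,'m) freealg \<Rightarrow> bool" where
  "free_algs C S F \<longleftrightarrow> (\<forall>X.
     FI F X \<in> hom C (FO S (FT F X)) (FT F X) \<and> FE F X \<in> hom C X (FT F X) \<and>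
     (\<forall>A a f. a \<in> hom C (FO S A) A \<longrightarrow> f \<in> hom C X A \<longrightarrow>
        (\<exists>!h. alg_hom C S (FT F X) (FI F X) A a h \<and> Cmp C h (FE F X) = f)))"

definition fext :: "('o,'m) cat \<Rightarrow> ('o,'m) endo \<Rightarrow> ('o,'m) freealg \<Rightarrow> 'o \<Rightarrow> 'o \<Rightarrow> 'm \<Rightarrow> 'm \<Rightarrow> 'm" where
  "fext C S F X A a f = (THE h. alg_hom C S (FT F X) (FI F X) A a h \<and> Cmp C h (FE F X) = f)"

definition hat :: "('o,'m) cat \<Rightarrow> ('o,'m) endo \<Rightarrow> ('o,'m) freealg \<Rightarrow> 'm \<Rightarrow> 'm" where
  "hat C S F a = fext C S F (Cod C a) (Cod C a) a (Idm C (Cod C a))"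

definition freemap :: "('o,'m) cat \<Rightarrow> ('o,'m) endo \<Rightarrow> ('o,'m) freealg \<Rightarrow> 'm \<Rightarrow> 'm" where
  "freemap C S F f = fext C S F (Dom C f) (FT F (Cod C f)) (FI F (Cod C f)) (Cmp C (FE F (Cod C f)) f)"

definition coalg_hom :: "('o,'m) cat \<Rightarrow> ('o,'m) bif \<Rightarrow> 'o \<Rightarrow> 'o \<Rightarrow> 'm \<Rightarrow> 'o \<Rightarrow> 'm \<Rightarrow> 'm \<Rightarrow> bool" where
  "coalg_hom C B X D d D' d' h \<longleftrightarrow> h \<in> hom C D D' \<and> Cmp C d' h = Cmp C (BM B (Idm C X) h) d"

definition final_coalgs :: "('o,'m) cat \<Rightarrow> ('o,'m) bif \<Rightarrow> ('o \<Rightarrow> 'o) \<Rightarrow> ('o \<Rightarrow> 'm) \<Rightarrow> bool" where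
  "final_coalgs C B nu tau \<longleftrightarrow> (\<forall>X.
     tau X \<in> hom C (nu X) (BO B X (nu X)) \<and>
     (\<forall>D d. d \<in> hom C D (BO B X D) \<longrightarrow> (\<exists>!h. coalg_hom C B X D d (nu X) (tau X) h)))"

definition ho_gsos_law :: "('o,'m) cat \<Rightarrow> ('o,'m) endo \<Rightarrow> ('o,'m) bif \<Rightarrow> ('o,'m) prods \<Rightarrow>
    ('o,'m) coprods \<Rightarrow> ('o,'m) freealg \<Rightarrow> ('o \<Rightarrow> 'o \<Rightarrow> 'm) \<Rightarrow> bool" where
  "ho_gsos_law C S B P Q F rho \<longleftrightarrow>
     (\<forall>X Y. rho X Y \<in> hom C (FO S (Pr P X (BO B X Y))) (BO B X (FT F (Cp Q X Y)))) \<and>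
     \<comment> \<open>dinaturality in X\<close>
     (\<forall>f X X' Y. f \<in> hom C X X' \<longrightarrow>
        Cmp C (BM B (Idm C X) (freemap C S F (coprodm C Q f (Idm C Y))))
          (Cmp C (rho X Y) (FM S (prodm C P (Idm C X) (BM B f (Idm C Y)))))
        = Cmp C (BM B f (Idm C (FT F (Cp Q X' Y))))
          (Cmp C (rho X' Y) (FM S (prodm C P f (Idm C (BO B X' Y)))))) \<and>
     \<comment> \<open>naturality in Y\<close>
     (\<forall>g X Y Y'. g \<in> hom C Y Y' \<longrightarrow>
        Cmp C (BM B (Idm C X) (freemap C S F (coprodm C Q (Idm C X) g))) (rho X Y)
        = Cmp C (rho X Y') (FM S (prodm C P (Idm C X) (BM B (Idm C X) g))))"

definition rho_bialgebra :: "('o,'m) cat \<Rightarrow> ('o,'m) endo \<Rightarrow> ('o,'m) bif \<Rightarrow> ('o,'m) prods \<Rightarrow>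
    ('o,'m) coprods \<Rightarrow> ('o,'m) freealg \<Rightarrow> ('o \<Rightarrow> 'o \<Rightarrow> 'm) \<Rightarrow> 'o \<Rightarrow> 'm \<Rightarrow> 'm \<Rightarrow> bool" where
  "rho_bialgebra C S B P Q F rho X a c \<longleftrightarrow>
     a \<in> hom C (FO S X) X \<and> c \<in> hom C X (BO B X X) \<and>
     Cmp C c a = Cmp C (BM B (Idm C X) (Cmp C (hat C S F a) (freemap C S F (codiag C Q X))))
                   (Cmp C (rho X X) (FM S (Pair P (Idm C X) c)))"

text \<open>The operational model gamma : mu Sigma -> B(mu Sigma, mu Sigma) (the unique such map;
  uniqueness follows from initiality, so we only require the defining equation).\<close>
definition op_model :: "('o,'m) cat \<Rightarrow> ('o,'m) endo \<Rightarrow> ('o,'m) bif \<Rightarrow> ('o,'m) prods \<Rightarrow>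
    ('o,'m) coprods \<Rightarrow> ('o,'m) freealg \<Rightarrow> ('o \<Rightarrow> 'o \<Rightarrow> 'm) \<Rightarrow> 'o \<Rightarrow> 'm \<Rightarrow> 'm \<Rightarrow> bool" where
  "op_model C S B P Q F rho mu i gamma \<longleftrightarrow> rho_bialgebra C S B P Q F rho mu i gamma"

end

theory Submission
  imports Defs
begin

text \<open>The interpretation \<open>sem\<close> is a morphism of \<open>B(\<mu>\<Sigma>,-)\<close>-coalgebras from the operational
  model \<open>(\<mu>\<Sigma>, \<gamma>)\<close> to \<open>(X, B(sem,id) \<cdot> c)\<close>: both \<open>B(id,sem) \<cdot> \<gamma>\<close> and \<open>B(sem,id) \<cdot> c \<cdot> sem\<close>
  satisfy the same primitive-recursive equation over \<open>\<mu>\<Sigma>\<close>, the first by naturality of \<open>\<rho>\<close> in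
  its covariant argument, the second by the bialgebra law and dinaturality of \<open>\<rho>\<close>, so they
  coincide by initiality. Post-composing \<open>sem\<close> with the unique coalgebra morphism \<open>k\<close> from
  \<open>(X, B(sem,id) \<cdot> c)\<close> into the final coalgebra gives a coalgebra morphism out of
  \<open>(\<mu>\<Sigma>, \<gamma>)\<close>, which by finality is \<open>beh\<close>.\<close>

locale gsos_setting =
  fixes C :: "('o,'m) cat" and S :: "('o,'m) endo" and B :: "('o,'m) bif"
    and P :: "('o,'m) prods" and Q :: "('o,'m) coprods" and F :: "('o,'m) freealg"
  assumes category: "category C" and endofunctor: "endofunctor C S" and bifunctor: "bifunctor C B"
    and products: "binary_products C P" and coproducts: "binary_coproducts C Q"
    and free_algebras: "free_algs C S F"
begin

abbreviation cmp (infixr "\<odot>" 55) where "g \<odot> f \<equiv> Cmp C g f"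

lemma id_in_hom: "Idm C X \<in> hom C X X"
  using category unfolding category_def by blast

lemma comp_in_hom: "f \<in> hom C X Y \<Longrightarrow> g \<in> hom C Y Z \<Longrightarrow> g \<odot> f \<in> hom C X Z"
  using category unfolding category_def by blast

lemma arr_comp [simp]: "Arr C f \<Longrightarrow> Arr C g \<Longrightarrow> Cod C f = Dom C g \<Longrightarrow> Arr C (g \<odot> f)"
  and dom_comp [simp]: "Arr C f \<Longrightarrow> Arr C g \<Longrightarrow> Cod C f = Dom C g \<Longrightarrow> Dom C (g \<odot> f) = Dom C f"
  and cod_comp [simp]: "Arr C f \<Longrightarrow> Arr C g \<Longrightarrow> Cod C f = Dom C g \<Longrightarrow> Cod C (g \<odot> f) = Cod C g"
  using comp_in_hom[of f "Dom C f" "Cod C f" g "Cod C g"] unfolding hom_def by simp_all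

lemma arr_Idm [simp]: "Arr C (Idm C X)" and dom_Idm [simp]: "Dom C (Idm C X) = X"
  and cod_Idm [simp]: "Cod C (Idm C X) = X"
  using id_in_hom[of X] unfolding hom_def by simp_all

lemma comp_Idm [simp]: "Arr C f \<Longrightarrow> Dom C f = X \<Longrightarrow> f \<odot> Idm C X = f"
  and Idm_comp [simp]: "Arr C f \<Longrightarrow> Cod C f = X \<Longrightarrow> Idm C X \<odot> f = f"
  using category unfolding category_def by (auto simp: hom_def)

lemma Cmp_assoc [simp]:
  assumes "Arr C f" "Arr C g" "Arr C h" "Cod C f = Dom C g" "Cod C g = Dom C h"
  shows "(h \<odot> g) \<odot> f = h \<odot> (g \<odot> f)"
proof -
  have "f \<in> hom C (Dom C f) (Cod C f)" "g \<in> hom C (Cod C f) (Cod C g)" "h \<in> hom C (Cod C g) (Cod C h)"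
    using assms by (simp_all add: hom_def)
  then show ?thesis
    using category unfolding category_def by metis
qed

lemma arr_FM [simp]: "Arr C f \<Longrightarrow> Arr C (FM S f)"
  and dom_FM [simp]: "Arr C f \<Longrightarrow> Dom C (FM S f) = FO S (Dom C f)"
  and cod_FM [simp]: "Arr C f \<Longrightarrow> Cod C (FM S f) = FO S (Cod C f)"
  using endofunctor unfolding endofunctor_def by (auto simp: hom_def)

lemma FM_Idm [simp]: "FM S (Idm C X) = Idm C (FO S X)"
  using endofunctor unfolding endofunctor_def by blast

lemma FM_comp: "Arr C f \<Longrightarrow> Arr C g \<Longrightarrow> Cod C f = Dom C g \<Longrightarrow> FM S (g \<odot> f) = FM S g \<odot> FM S f"
  using endofunctor unfolding endofunctor_def by (auto simp: hom_def)

lemma arr_BM [simp]: "Arr C f \<Longrightarrow> Arr C g \<Longrightarrow> Arr C (BM B f g)"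
  and dom_BM [simp]: "Arr C f \<Longrightarrow> Arr C g \<Longrightarrow> Dom C (BM B f g) = BO B (Cod C f) (Dom C g)"
  and cod_BM [simp]: "Arr C f \<Longrightarrow> Arr C g \<Longrightarrow> Cod C (BM B f g) = BO B (Dom C f) (Cod C g)"
  using bifunctor unfolding bifunctor_def by (auto simp: hom_def)

lemma BM_comp:
  "Arr C f \<Longrightarrow> Arr C f' \<Longrightarrow> Arr C g \<Longrightarrow> Arr C g' \<Longrightarrow> Dom C f = Cod C f' \<Longrightarrow> Cod C g = Dom C g' \<Longrightarrow>
    BM B (f \<odot> f') (g' \<odot> g) = BM B f' g' \<odot> BM B f g"
  using bifunctor unfolding bifunctor_def by (auto simp: hom_def)

lemma BM_Idm_comp:
  "Arr C g \<Longrightarrow> Arr C g' \<Longrightarrow> Cod C g = Dom C g' \<Longrightarrow>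
    BM B (Idm C Z) (g' \<odot> g) = BM B (Idm C Z) g' \<odot> BM B (Idm C Z) g"
  using BM_comp[of "Idm C Z" "Idm C Z" g g'] by simp

lemma BM_interchange:
  assumes "Arr C f" "Dom C f = X'" "Cod C f = X" "Arr C g" "Dom C g = Y" "Cod C g = Y'"
  shows "BM B f (Idm C Y') \<odot> BM B (Idm C X) g = BM B (Idm C X') g \<odot> BM B f (Idm C Y)"
  using BM_comp[of f "Idm C X'" "Idm C Y" g] BM_comp[of "Idm C X" f g "Idm C Y'"] assms by simp

lemma projections_in_hom: "P1 P X Y \<in> hom C (Pr P X Y) X" "P2 P X Y \<in> hom C (Pr P X Y) Y"
  using products unfolding binary_products_def by blast+

lemma pairing:
  assumes "f \<in> hom C Z X" "g \<in> hom C Z Y"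
  shows "Pair P f g \<in> hom C Z (Pr P X Y)"
    and "P1 P X Y \<odot> Pair P f g = f" "P2 P X Y \<odot> Pair P f g = g"
    and "h \<in> hom C Z (Pr P X Y) \<Longrightarrow> P1 P X Y \<odot> h = f \<Longrightarrow> P2 P X Y \<odot> h = g \<Longrightarrow> h = Pair P f g"
  using products[unfolded binary_products_def, rule_format, of X Y] assms by blast+

lemma arr_P1 [simp]: "Arr C (P1 P X Y)" and dom_P1 [simp]: "Dom C (P1 P X Y) = Pr P X Y"
  and cod_P1 [simp]: "Cod C (P1 P X Y) = X"
  and arr_P2 [simp]: "Arr C (P2 P X Y)" and dom_P2 [simp]: "Dom C (P2 P X Y) = Pr P X Y"
  and cod_P2 [simp]: "Cod C (P2 P X Y) = Y"
  using projections_in_hom[of X Y] unfolding hom_def by simp_all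

context
  fixes f g
  assumes f: "Arr C f" and g: "Arr C g" and dom_eq: "Dom C f = Dom C g"
begin

lemma arr_Pair [simp]: "Arr C (Pair P f g)"
  and dom_Pair [simp]: "Dom C (Pair P f g) = Dom C f"
  and cod_Pair [simp]: "Cod C (Pair P f g) = Pr P (Cod C f) (Cod C g)"
  using pairing(1)[of f "Dom C f" "Cod C f" g "Cod C g"] f g dom_eq unfolding hom_def by simp_all

lemma P1_Pair [simp]: "Cod C f = X \<Longrightarrow> Cod C g = Y \<Longrightarrow> P1 P X Y \<odot> Pair P f g = f"
  and P2_Pair [simp]: "Cod C f = X \<Longrightarrow> Cod C g = Y \<Longrightarrow> P2 P X Y \<odot> Pair P f g = g"
  using pairing(2,3)[of f "Dom C f" X g Y] f g dom_eq unfolding hom_def by simp_all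

lemma P1_Pair_comp [simp]:
  "Cod C f = X \<Longrightarrow> Cod C g = Y \<Longrightarrow> Arr C h \<Longrightarrow> Cod C h = Dom C f \<Longrightarrow> P1 P X Y \<odot> (Pair P f g \<odot> h) = f \<odot> h"
  and P2_Pair_comp [simp]:
  "Cod C f = X \<Longrightarrow> Cod C g = Y \<Longrightarrow> Arr C h \<Longrightarrow> Cod C h = Dom C f \<Longrightarrow> P2 P X Y \<odot> (Pair P f g \<odot> h) = g \<odot> h"
  using f g dom_eq by (simp_all flip: Cmp_assoc)

lemma Pair_comp: "Arr C h \<Longrightarrow> Cod C h = Dom C f \<Longrightarrow> Pair P f g \<odot> h = Pair P (f \<odot> h) (g \<odot> h)"
  using pairing(4)[of "f \<odot> h" "Dom C h" "Cod C f" "g \<odot> h" "Cod C g" "Pair P f g \<odot> h"] f g dom_eq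
  by (simp add: hom_def)

end

lemma injections_in_hom: "In1 Q X Y \<in> hom C X (Cp Q X Y)" "In2 Q X Y \<in> hom C Y (Cp Q X Y)"
  using coproducts unfolding binary_coproducts_def by blast+

lemma copairing:
  assumes "f \<in> hom C X Z" "g \<in> hom C Y Z"
  shows "Copair Q f g \<in> hom C (Cp Q X Y) Z"
    and "Copair Q f g \<odot> In1 Q X Y = f" "Copair Q f g \<odot> In2 Q X Y = g"
    and "h \<in> hom C (Cp Q X Y) Z \<Longrightarrow> h \<odot> In1 Q X Y = f \<Longrightarrow> h \<odot> In2 Q X Y = g \<Longrightarrow> h = Copair Q f g"
  using coproducts[unfolded binary_coproducts_def, rule_format, of X Y] assms by blast+

lemma arr_In1 [simp]: "Arr C (In1 Q X Y)" and dom_In1 [simp]: "Dom C (In1 Q X Y) = X"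
  and cod_In1 [simp]: "Cod C (In1 Q X Y) = Cp Q X Y"
  and arr_In2 [simp]: "Arr C (In2 Q X Y)" and dom_In2 [simp]: "Dom C (In2 Q X Y) = Y"
  and cod_In2 [simp]: "Cod C (In2 Q X Y) = Cp Q X Y"
  using injections_in_hom[of X Y] unfolding hom_def by simp_all

context
  fixes f g
  assumes f: "Arr C f" and g: "Arr C g" and cod_eq: "Cod C f = Cod C g"
begin

lemma arr_Copair [simp]: "Arr C (Copair Q f g)"
  and dom_Copair [simp]: "Dom C (Copair Q f g) = Cp Q (Dom C f) (Dom C g)"
  and cod_Copair [simp]: "Cod C (Copair Q f g) = Cod C f"
  using copairing(1)[of f "Dom C f" "Cod C f" g "Dom C g"] f g cod_eq unfolding hom_def by simp_all

lemma Copair_In1 [simp]: "Dom C f = X \<Longrightarrow> Dom C g = Y \<Longrightarrow> Copair Q f g \<odot> In1 Q X Y = f"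
  and Copair_In2 [simp]: "Dom C f = X \<Longrightarrow> Dom C g = Y \<Longrightarrow> Copair Q f g \<odot> In2 Q X Y = g"
  using copairing(2,3)[of f X "Cod C f" g Y] f g cod_eq unfolding hom_def by simp_all

lemma Copair_In1_comp [simp]:
  "Dom C f = X \<Longrightarrow> Dom C g = Y \<Longrightarrow> Arr C h \<Longrightarrow> Cod C h = X \<Longrightarrow> Copair Q f g \<odot> (In1 Q X Y \<odot> h) = f \<odot> h"
  and Copair_In2_comp [simp]:
  "Dom C f = X \<Longrightarrow> Dom C g = Y \<Longrightarrow> Arr C h \<Longrightarrow> Cod C h = Y \<Longrightarrow> Copair Q f g \<odot> (In2 Q X Y \<odot> h) = g \<odot> h"
  using f g cod_eq by (simp_all flip: Cmp_assoc)

lemma Copair_eqI: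
  assumes h: "Arr C h" "Dom C h = Cp Q (Dom C f) (Dom C g)"
    and h_In1: "h \<odot> In1 Q (Dom C f) (Dom C g) = f" and h_In2: "h \<odot> In2 Q (Dom C f) (Dom C g) = g"
  shows "h = Copair Q f g"
proof -
  have "Cod C (h \<odot> In1 Q (Dom C f) (Dom C g)) = Cod C h"
    using h by simp
  then have "Cod C f = Cod C h"
    by (simp only: h_In1)
  then show ?thesis
    using copairing(4)[of f "Dom C f" "Cod C f" g "Dom C g" h] f g cod_eq h h_In1 h_In2
    by (simp add: hom_def)
qed

end

lemma comp_Copair:
  assumes "Arr C f" "Arr C g" "Cod C f = Cod C g" "Arr C h" "Dom C h = Cod C f"
  shows "h \<odot> Copair Q f g = Copair Q (h \<odot> f) (h \<odot> g)"
  by (rule Copair_eqI) (use assms in simp_all)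

lemma Copair_comp_coprodm:
  assumes "Arr C f" "Arr C g" "Cod C f = Cod C g" "Arr C h" "Arr C k" "Cod C h = Dom C f" "Cod C k = Dom C g"
  shows "Copair Q f g \<odot> coprodm C Q h k = Copair Q (f \<odot> h) (g \<odot> k)"
  by (rule Copair_eqI) (use assms in \<open>simp_all add: coprodm_def\<close>)

lemma arr_coprodm [simp]: "Arr C f \<Longrightarrow> Arr C g \<Longrightarrow> Arr C (coprodm C Q f g)"
  and dom_coprodm [simp]: "Arr C f \<Longrightarrow> Arr C g \<Longrightarrow> Dom C (coprodm C Q f g) = Cp Q (Dom C f) (Dom C g)"
  and cod_coprodm [simp]: "Arr C f \<Longrightarrow> Arr C g \<Longrightarrow> Cod C (coprodm C Q f g) = Cp Q (Cod C f) (Cod C g)"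
  by (simp_all add: coprodm_def)

lemma arr_prodm [simp]: "Arr C f \<Longrightarrow> Arr C g \<Longrightarrow> Arr C (prodm C P f g)"
  and dom_prodm [simp]: "Arr C f \<Longrightarrow> Arr C g \<Longrightarrow> Dom C (prodm C P f g) = Pr P (Dom C f) (Dom C g)"
  and cod_prodm [simp]: "Arr C f \<Longrightarrow> Arr C g \<Longrightarrow> Cod C (prodm C P f g) = Pr P (Cod C f) (Cod C g)"
  by (simp_all add: prodm_def)

lemma arr_codiag [simp]: "Arr C (codiag C Q Y)" and dom_codiag [simp]: "Dom C (codiag C Q Y) = Cp Q Y Y"
  and cod_codiag [simp]: "Cod C (codiag C Q Y) = Y"
  by (simp_all add: codiag_def)

lemma comp_codiag: "Arr C f \<Longrightarrow> Dom C f = Y \<Longrightarrow> f \<odot> codiag C Q Y = Copair Q f f"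
  unfolding codiag_def by (simp add: comp_Copair)

lemma codiag_comp_coprodm:
  "Arr C f \<Longrightarrow> Arr C g \<Longrightarrow> Cod C f = Y \<Longrightarrow> Cod C g = Y \<Longrightarrow> codiag C Q Y \<odot> coprodm C Q f g = Copair Q f g"
  unfolding codiag_def by (simp add: Copair_comp_coprodm)

section \<open>Free algebras\<close>

lemma free_alg_in_hom: "FI F X \<in> hom C (FO S (FT F X)) (FT F X)" "FE F X \<in> hom C X (FT F X)"
  using free_algebras unfolding free_algs_def by blast+

lemma arr_FI [simp]: "Arr C (FI F X)" and dom_FI [simp]: "Dom C (FI F X) = FO S (FT F X)"
  and cod_FI [simp]: "Cod C (FI F X) = FT F X"
  and arr_FE [simp]: "Arr C (FE F X)" and dom_FE [simp]: "Dom C (FE F X) = X"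
  and cod_FE [simp]: "Cod C (FE F X) = FT F X"
  using free_alg_in_hom[of X] unfolding hom_def by simp_all

lemma fext:
  assumes "a \<in> hom C (FO S A) A" "f \<in> hom C X A"
  shows "alg_hom C S (FT F X) (FI F X) A a (fext C S F X A a f)"
    and "fext C S F X A a f \<odot> FE F X = f"
proof -
  have "\<exists>!h. alg_hom C S (FT F X) (FI F X) A a h \<and> h \<odot> FE F X = f"
    using free_algebras[unfolded free_algs_def, THEN spec[of _ X], THEN conjunct2, THEN conjunct2]
      assms by blast
  from theI'[OF this] show "alg_hom C S (FT F X) (FI F X) A a (fext C S F X A a f)"
    "fext C S F X A a f \<odot> FE F X = f"
    unfolding fext_def by simp_all
qed

lemma free_alg_hom_eqI:
  assumes a: "a \<in> hom C (FO S A) A"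
    and h: "alg_hom C S (FT F X) (FI F X) A a h" and h': "alg_hom C S (FT F X) (FI F X) A a h'"
    and unit: "h \<odot> FE F X = h' \<odot> FE F X"
  shows "h = h'"
proof -
  have "h \<odot> FE F X \<in> hom C X A"
    using h unfolding alg_hom_def hom_def by simp
  then have "\<exists>!k. alg_hom C S (FT F X) (FI F X) A a k \<and> k \<odot> FE F X = h \<odot> FE F X"
    using free_algebras[unfolded free_algs_def, THEN spec[of _ X], THEN conjunct2, THEN conjunct2]
      a by blast
  then show ?thesis
    using h h' unit by (metis (no_types))
qed

lemma alg_hom_comp:
  assumes h: "alg_hom C S A a A' a' h" and k: "alg_hom C S A' a' A'' a'' k"
    and "a \<in> hom C (FO S A) A" "a' \<in> hom C (FO S A') A'" "a'' \<in> hom C (FO S A'') A''"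
  shows "alg_hom C S A a A'' a'' (k \<odot> h)"
proof -
  have [simp]: "Arr C h" "Dom C h = A" "Cod C h = A'" "Arr C k" "Dom C k = A'" "Cod C k = A''"
    "Arr C a" "Dom C a = FO S A" "Cod C a = A" "Arr C a'" "Dom C a' = FO S A'" "Cod C a' = A'"
    "Arr C a''" "Dom C a'' = FO S A''" "Cod C a'' = A''"
    using assms unfolding alg_hom_def hom_def by auto
  have "(k \<odot> h) \<odot> a = k \<odot> (a' \<odot> FM S h)"
    using h unfolding alg_hom_def by simp
  also have "\<dots> = (a'' \<odot> FM S k) \<odot> FM S h"
    using k unfolding alg_hom_def by (simp flip: Cmp_assoc)
  also have "\<dots> = a'' \<odot> FM S (k \<odot> h)"
    by (simp add: FM_comp)
  finally show ?thesis
    unfolding alg_hom_def hom_def by simp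
qed

lemma hat:
  assumes "a \<in> hom C (FO S A) A"
  shows "alg_hom C S (FT F A) (FI F A) A a (hat C S F a)" and "hat C S F a \<odot> FE F A = Idm C A"
  using fext[OF assms id_in_hom] assms unfolding hat_def hom_def by simp_all

lemma arr_hat [simp]: "Arr C a \<Longrightarrow> Dom C a = FO S (Cod C a) \<Longrightarrow> Arr C (hat C S F a)"
  and dom_hat [simp]: "Arr C a \<Longrightarrow> Dom C a = FO S (Cod C a) \<Longrightarrow> Dom C (hat C S F a) = FT F (Cod C a)"
  and cod_hat [simp]: "Arr C a \<Longrightarrow> Dom C a = FO S (Cod C a) \<Longrightarrow> Cod C (hat C S F a) = Cod C a"
  using hat(1)[of a "Cod C a"] unfolding alg_hom_def hom_def by simp_all

lemma hat_FE_comp [simp]: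
  "Arr C a \<Longrightarrow> Dom C a = FO S A \<Longrightarrow> Cod C a = A \<Longrightarrow> Arr C x \<Longrightarrow> Cod C x = A \<Longrightarrow>
    hat C S F a \<odot> (FE F A \<odot> x) = x"
  using hat(2)[of a A] by (simp add: hom_def flip: Cmp_assoc)

lemma freemap:
  assumes "Arr C f"
  shows "alg_hom C S (FT F (Dom C f)) (FI F (Dom C f)) (FT F (Cod C f)) (FI F (Cod C f)) (freemap C S F f)"
    and "freemap C S F f \<odot> FE F (Dom C f) = FE F (Cod C f) \<odot> f"
  using fext[OF free_alg_in_hom(1), of "FE F (Cod C f) \<odot> f" "Dom C f"] assms
  unfolding freemap_def hom_def by simp_all

lemma arr_freemap [simp]: "Arr C f \<Longrightarrow> Arr C (freemap C S F f)"
  and dom_freemap [simp]: "Arr C f \<Longrightarrow> Dom C (freemap C S F f) = FT F (Dom C f)"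
  and cod_freemap [simp]: "Arr C f \<Longrightarrow> Cod C (freemap C S F f) = FT F (Cod C f)"
  using freemap(1) unfolding alg_hom_def hom_def by blast+

lemma freemap_FE_comp [simp]:
  "Arr C f \<Longrightarrow> Dom C f = Y \<Longrightarrow> Arr C x \<Longrightarrow> Cod C x = Y \<Longrightarrow>
    freemap C S F f \<odot> (FE F Y \<odot> x) = FE F (Cod C f) \<odot> (f \<odot> x)"
  using freemap(2)[of f] by (simp flip: Cmp_assoc)

lemma freemap_comp:
  assumes "Arr C f" "Arr C g" "Cod C f = Dom C g"
  shows "freemap C S F (g \<odot> f) = freemap C S F g \<odot> freemap C S F f"
proof (rule free_alg_hom_eqI[OF free_alg_in_hom(1)])
  have "alg_hom C S (FT F (Dom C f)) (FI F (Dom C f)) (FT F (Dom C g)) (FI F (Dom C g)) (freemap C S F f)"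
    using freemap(1)[OF assms(1)] assms(3) by simp
  then show "alg_hom C S (FT F (Dom C f)) (FI F (Dom C f)) (FT F (Cod C g)) (FI F (Cod C g))
      (freemap C S F g \<odot> freemap C S F f)"
    using alg_hom_comp freemap(1)[OF assms(2)] free_alg_in_hom(1) by blast
  show "alg_hom C S (FT F (Dom C f)) (FI F (Dom C f)) (FT F (Cod C g)) (FI F (Cod C g)) (freemap C S F (g \<odot> f))"
    using freemap(1)[of "g \<odot> f"] assms by simp
  show "freemap C S F (g \<odot> f) \<odot> FE F (Dom C f) = (freemap C S F g \<odot> freemap C S F f) \<odot> FE F (Dom C f)"
    using freemap(2)[of "g \<odot> f"] freemap(2)[of f] assms by simp
qed

lemma hat_natural:
  assumes h: "alg_hom C S A a A' a' h" and a: "a \<in> hom C (FO S A) A" and a': "a' \<in> hom C (FO S A') A'"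
  shows "h \<odot> hat C S F a = hat C S F a' \<odot> freemap C S F h"
proof (rule free_alg_hom_eqI[OF a'])
  have [simp]: "Arr C h" "Dom C h = A" "Cod C h = A'" "Arr C a" "Dom C a = FO S A" "Cod C a = A"
    "Arr C a'" "Dom C a' = FO S A'" "Cod C a' = A'"
    using h a a' unfolding alg_hom_def hom_def by auto
  show "alg_hom C S (FT F A) (FI F A) A' a' (h \<odot> hat C S F a)"
    using alg_hom_comp[OF hat(1)[OF a] h free_alg_in_hom(1) a a'] .
  have "alg_hom C S (FT F A) (FI F A) (FT F A') (FI F A') (freemap C S F h)"
    using freemap(1)[of h] by simp
  then show "alg_hom C S (FT F A) (FI F A) A' a' (hat C S F a' \<odot> freemap C S F h)"
    using alg_hom_comp hat(1)[OF a'] free_alg_in_hom(1) a' by blast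
  show "(h \<odot> hat C S F a) \<odot> FE F A = (hat C S F a' \<odot> freemap C S F h) \<odot> FE F A"
    using hat(2)[OF a] freemap(2)[of h] by simp
qed

text \<open>Each solution \<open>f\<close> yields the algebra morphism \<open>\<langle>id, f\<rangle>\<close> into
  \<open>(\<mu> \<times> D, \<langle>\<iota> \<cdot> \<Sigma>\<pi>\<^sub>1, G\<rangle>)\<close>, which initiality makes unique.\<close>

lemma initial_alg_primrec_unique:
  assumes init: "initial_alg C S mu i" and G: "G \<in> hom C (FO S (Pr P mu D)) D"
    and f: "f \<in> hom C mu D" "f \<odot> i = G \<odot> FM S (Pair P (Idm C mu) f)"
    and f': "f' \<in> hom C mu D" "f' \<odot> i = G \<odot> FM S (Pair P (Idm C mu) f')"
  shows "f = f'"
proof -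
  have [simp]: "Arr C i" "Dom C i = FO S mu" "Cod C i = mu" "Arr C G" "Dom C G = FO S (Pr P mu D)" "Cod C G = D"
    using init G unfolding initial_alg_def hom_def by auto
  define g where "g = Pair P (i \<odot> FM S (P1 P mu D)) G"
  have g: "g \<in> hom C (FO S (Pr P mu D)) (Pr P mu D)"
    unfolding g_def hom_def by simp
  have pair_alg_hom: "alg_hom C S mu i (Pr P mu D) g (Pair P (Idm C mu) h)"
    if h: "h \<in> hom C mu D" "h \<odot> i = G \<odot> FM S (Pair P (Idm C mu) h)" for h
  proof -
    have [simp]: "Arr C h" "Dom C h = mu" "Cod C h = D"
      using h unfolding hom_def by auto
    have "Pair P (Idm C mu) h \<odot> i = Pair P i (h \<odot> i)"
      by (simp add: Pair_comp)
    also have "\<dots> = Pair P (i \<odot> FM S (P1 P mu D) \<odot> FM S (Pair P (Idm C mu) h)) (G \<odot> FM S (Pair P (Idm C mu) h))"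
      using h(2) by (simp flip: FM_comp)
    also have "\<dots> = g \<odot> FM S (Pair P (Idm C mu) h)"
      unfolding g_def by (simp add: Pair_comp)
    finally show ?thesis
      unfolding alg_hom_def hom_def by simp
  qed
  have "\<exists>!h. alg_hom C S mu i (Pr P mu D) g h"
    using init g unfolding initial_alg_def by blast
  then have "Pair P (Idm C mu) f = Pair P (Idm C mu) f'"
    using pair_alg_hom[OF f] pair_alg_hom[OF f'] by blast
  then have "P2 P mu D \<odot> Pair P (Idm C mu) f = P2 P mu D \<odot> Pair P (Idm C mu) f'"
    by simp
  then show ?thesis
    using f f' unfolding hom_def by simp
qed

lemma coalg_hom_comp:
  assumes h: "coalg_hom C B Z D d D' d' h" and k: "coalg_hom C B Z D' d' D'' d'' k"
    and "d \<in> hom C D (BO B Z D)" "d' \<in> hom C D' (BO B Z D')" "d'' \<in> hom C D'' (BO B Z D'')"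
  shows "coalg_hom C B Z D d D'' d'' (k \<odot> h)"
proof -
  have [simp]: "Arr C h" "Dom C h = D" "Cod C h = D'" "Arr C k" "Dom C k = D'" "Cod C k = D''"
    "Arr C d" "Dom C d = D" "Cod C d = BO B Z D" "Arr C d'" "Dom C d' = D'" "Cod C d' = BO B Z D'"
    "Arr C d''" "Dom C d'' = D''" "Cod C d'' = BO B Z D''"
    using assms unfolding coalg_hom_def hom_def by auto
  have "d'' \<odot> (k \<odot> h) = BM B (Idm C Z) k \<odot> (d' \<odot> h)"
    using k unfolding coalg_hom_def by (simp flip: Cmp_assoc)
  also have "\<dots> = BM B (Idm C Z) k \<odot> BM B (Idm C Z) h \<odot> d"
    using h unfolding coalg_hom_def by simp
  also have "\<dots> = BM B (Idm C Z) (k \<odot> h) \<odot> d"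
    by (simp add: BM_Idm_comp)
  finally show ?thesis
    unfolding coalg_hom_def hom_def by simp
qed

end

section \<open>Bialgebras of a higher-order GSOS law\<close>

locale gsos_bialgebra = gsos_setting +
  fixes rho and mu and i gamma and X and a c sem
  assumes law: "ho_gsos_law C S B P Q F rho"
    and initial: "initial_alg C S mu i"
    and model: "op_model C S B P Q F rho mu i gamma"
    and bialgebra: "rho_bialgebra C S B P Q F rho X a c"
    and sem: "alg_hom C S mu i X a sem"
begin

lemma arr_rho [simp]: "Arr C (rho Y Z)"
  and dom_rho [simp]: "Dom C (rho Y Z) = FO S (Pr P Y (BO B Y Z))"
  and cod_rho [simp]: "Cod C (rho Y Z) = BO B Y (FT F (Cp Q Y Z))"
  using law unfolding ho_gsos_law_def hom_def by auto

lemma arr_i [simp]: "Arr C i" and dom_i [simp]: "Dom C i = FO S mu" and cod_i [simp]: "Cod C i = mu"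
  using initial unfolding initial_alg_def hom_def by auto

lemma arr_gamma [simp]: "Arr C gamma" and dom_gamma [simp]: "Dom C gamma = mu"
  and cod_gamma [simp]: "Cod C gamma = BO B mu mu"
  using model unfolding op_model_def rho_bialgebra_def hom_def by auto

lemma arr_a [simp]: "Arr C a" and dom_a [simp]: "Dom C a = FO S X" and cod_a [simp]: "Cod C a = X"
  and arr_c [simp]: "Arr C c" and dom_c [simp]: "Dom C c = X" and cod_c [simp]: "Cod C c = BO B X X"
  using bialgebra unfolding rho_bialgebra_def hom_def by auto

lemma arr_sem [simp]: "Arr C sem" and dom_sem [simp]: "Dom C sem = mu" and cod_sem [simp]: "Cod C sem = X"
  using sem unfolding alg_hom_def hom_def by auto

definition recursion_step where
  "recursion_step = BM B (Idm C mu) (hat C S F a \<odot> freemap C S F (Copair Q sem (Idm C X))) \<odot> rho mu X"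

lemma recursion_step_in_hom: "recursion_step \<in> hom C (FO S (Pr P mu (BO B mu X))) (BO B mu X)"
  unfolding recursion_step_def hom_def by simp

lemma sem_hat_codiag:
  "sem \<odot> hat C S F i \<odot> freemap C S F (codiag C Q mu)
    = hat C S F a \<odot> freemap C S F (Copair Q sem (Idm C X)) \<odot> freemap C S F (coprodm C Q (Idm C mu) sem)"
proof -
  have "sem \<odot> hat C S F i = hat C S F a \<odot> freemap C S F sem"
    using hat_natural[OF sem] bialgebra initial unfolding rho_bialgebra_def initial_alg_def by blast
  then have "sem \<odot> hat C S F i \<odot> freemap C S F (codiag C Q mu)
      = hat C S F a \<odot> freemap C S F (sem \<odot> codiag C Q mu)"
    by (simp add: freemap_comp flip: Cmp_assoc)
  also have "sem \<odot> codiag C Q mu = Copair Q sem (Idm C X) \<odot> coprodm C Q (Idm C mu) sem"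
    by (simp add: comp_codiag Copair_comp_coprodm)
  finally show ?thesis
    by (simp add: freemap_comp)
qed

lemma model_recursion:
  "(BM B (Idm C mu) sem \<odot> gamma) \<odot> i
    = recursion_step \<odot> FM S (Pair P (Idm C mu) (BM B (Idm C mu) sem \<odot> gamma))"
proof -
  have gamma_i: "gamma \<odot> i = BM B (Idm C mu) (hat C S F i \<odot> freemap C S F (codiag C Q mu))
      \<odot> rho mu mu \<odot> FM S (Pair P (Idm C mu) gamma)"
    using model unfolding op_model_def rho_bialgebra_def by blast
  have natural: "BM B (Idm C mu) (freemap C S F (coprodm C Q (Idm C mu) sem)) \<odot> rho mu mu
      = rho mu X \<odot> FM S (prodm C P (Idm C mu) (BM B (Idm C mu) sem))"
    by (rule law[unfolded ho_gsos_law_def, THEN conjunct2, THEN conjunct2, rule_format,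
          where g=sem and X=mu and Y=mu and Y'=X]) (simp add: hom_def)
  have "(BM B (Idm C mu) sem \<odot> gamma) \<odot> i
      = BM B (Idm C mu) (sem \<odot> hat C S F i \<odot> freemap C S F (codiag C Q mu))
        \<odot> rho mu mu \<odot> FM S (Pair P (Idm C mu) gamma)"
    by (simp add: gamma_i BM_Idm_comp)
  also have "\<dots> = BM B (Idm C mu) (hat C S F a \<odot> freemap C S F (Copair Q sem (Idm C X)))
      \<odot> (BM B (Idm C mu) (freemap C S F (coprodm C Q (Idm C mu) sem)) \<odot> rho mu mu)
      \<odot> FM S (Pair P (Idm C mu) gamma)"
    by (simp add: sem_hat_codiag BM_Idm_comp)
  also have "\<dots> = recursion_step \<odot> FM S (prodm C P (Idm C mu) (BM B (Idm C mu) sem) \<odot> Pair P (Idm C mu) gamma)"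
    unfolding natural recursion_step_def by (simp add: FM_comp)
  also have "prodm C P (Idm C mu) (BM B (Idm C mu) sem) \<odot> Pair P (Idm C mu) gamma
      = Pair P (Idm C mu) (BM B (Idm C mu) sem \<odot> gamma)"
    by (simp add: prodm_def Pair_comp)
  finally show ?thesis .
qed

lemma bialgebra_recursion:
  "(BM B sem (Idm C X) \<odot> c \<odot> sem) \<odot> i
    = recursion_step \<odot> FM S (Pair P (Idm C mu) (BM B sem (Idm C X) \<odot> c \<odot> sem))"
proof -
  let ?H = "hat C S F a \<odot> freemap C S F (codiag C Q X)"
  let ?p = "prodm C P (Idm C mu) (BM B sem (Idm C X))"
  let ?p' = "prodm C P sem (Idm C (BO B X X))"
  have sem_i: "sem \<odot> i = a \<odot> FM S sem"
    using sem unfolding alg_hom_def by blast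
  have c_a: "c \<odot> a = BM B (Idm C X) ?H \<odot> rho X X \<odot> FM S (Pair P (Idm C X) c)"
    using bialgebra unfolding rho_bialgebra_def by blast
  have dinatural: "BM B sem (Idm C (FT F (Cp Q X X))) \<odot> rho X X \<odot> FM S ?p'
      = BM B (Idm C mu) (freemap C S F (coprodm C Q sem (Idm C X))) \<odot> rho mu X \<odot> FM S ?p"
    by (rule law[unfolded ho_gsos_law_def, THEN conjunct2, THEN conjunct1, rule_format,
          where f=sem and X=mu and X'=X and Y=X, symmetric]) (simp add: hom_def)
  have interchange: "BM B sem (Idm C X) \<odot> BM B (Idm C X) ?H
      = BM B (Idm C mu) ?H \<odot> BM B sem (Idm C (FT F (Cp Q X X)))"
    by (rule BM_interchange) simp_all
  have "(BM B sem (Idm C X) \<odot> c \<odot> sem) \<odot> i = BM B sem (Idm C X) \<odot> (c \<odot> a) \<odot> FM S sem"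
    by (simp add: sem_i)
  also have "\<dots> = (BM B sem (Idm C X) \<odot> BM B (Idm C X) ?H) \<odot> rho X X \<odot> FM S (Pair P (Idm C X) c \<odot> sem)"
    unfolding c_a by (simp add: FM_comp)
  also have "Pair P (Idm C X) c \<odot> sem = ?p' \<odot> Pair P (Idm C mu) (c \<odot> sem)"
    by (simp add: prodm_def Pair_comp)
  also have "(BM B sem (Idm C X) \<odot> BM B (Idm C X) ?H) \<odot> rho X X \<odot> FM S (?p' \<odot> Pair P (Idm C mu) (c \<odot> sem))
      = BM B (Idm C mu) ?H \<odot> (BM B sem (Idm C (FT F (Cp Q X X))) \<odot> rho X X \<odot> FM S ?p')
        \<odot> FM S (Pair P (Idm C mu) (c \<odot> sem))"
    unfolding interchange by (simp add: FM_comp)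
  also have "\<dots> = BM B (Idm C mu) (?H \<odot> freemap C S F (coprodm C Q sem (Idm C X)))
      \<odot> rho mu X \<odot> FM S (?p \<odot> Pair P (Idm C mu) (c \<odot> sem))"
    unfolding dinatural by (simp add: FM_comp BM_Idm_comp)
  also have "?H \<odot> freemap C S F (coprodm C Q sem (Idm C X)) = hat C S F a \<odot> freemap C S F (Copair Q sem (Idm C X))"
    by (simp add: codiag_comp_coprodm flip: freemap_comp)
  also have "?p \<odot> Pair P (Idm C mu) (c \<odot> sem) = Pair P (Idm C mu) (BM B sem (Idm C X) \<odot> c \<odot> sem)"
    by (simp add: prodm_def Pair_comp)
  finally show ?thesis
    unfolding recursion_step_def by simp
qed

lemma sem_coalg_hom: "coalg_hom C B mu mu gamma X (BM B sem (Idm C X) \<odot> c) sem"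
proof -
  have "BM B sem (Idm C X) \<odot> c \<odot> sem = BM B (Idm C mu) sem \<odot> gamma"
    using initial_alg_primrec_unique[OF initial recursion_step_in_hom _ bialgebra_recursion _ model_recursion]
    by (simp add: hom_def)
  then show ?thesis
    unfolding coalg_hom_def hom_def by simp
qed

end

theorem theorem3p11:
  fixes C :: "('o,'m) cat" and S :: "('o,'m) endo" and B :: "('o,'m) bif"
    and P :: "('o,'m) prods" and Q :: "('o,'m) coprods" and F :: "('o,'m) freealg"
    and rho :: "'o \<Rightarrow> 'o \<Rightarrow> 'm" and mu :: 'o and i :: 'm
    and nu :: "'o \<Rightarrow> 'o" and tau :: "'o \<Rightarrow> 'm" and gamma :: 'm
    and X :: 'o and a c sem beh :: 'm
  assumes "category C"
    and "endofunctor C S"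
    and "bifunctor C B"
    and "binary_products C P"
    and "binary_coproducts C Q"
    and "initial_alg C S mu i"
    and "free_algs C S F"
    and "final_coalgs C B nu tau"
    and "ho_gsos_law C S B P Q F rho"
    and "op_model C S B P Q F rho mu i gamma"
    and "rho_bialgebra C S B P Q F rho X a c"
    and "alg_hom C S mu i X a sem"
    and "coalg_hom C B mu mu gamma (nu mu) (tau mu) beh"
  shows "\<exists>k \<in> hom C X (nu mu). Cmp C k sem = beh"
proof -
  interpret gsos_bialgebra C S B P Q F rho mu i gamma X a c sem
    using assms by unfold_locales
  have final: "tau mu \<in> hom C (nu mu) (BO B mu (nu mu))"
    "\<And>D d. d \<in> hom C D (BO B mu D) \<Longrightarrow> \<exists>!h. coalg_hom C B mu D d (nu mu) (tau mu) h"
    using assms(8) unfolding final_coalgs_def by blast+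
  have d: "BM B sem (Idm C X) \<odot> c \<in> hom C X (BO B mu X)" and gamma: "gamma \<in> hom C mu (BO B mu mu)"
    by (simp_all add: hom_def)
  obtain k where k: "coalg_hom C B mu X (BM B sem (Idm C X) \<odot> c) (nu mu) (tau mu) k"
    using final(2)[OF d] by blast
  have "coalg_hom C B mu mu gamma (nu mu) (tau mu) (k \<odot> sem)"
    using coalg_hom_comp[OF sem_coalg_hom k gamma d final(1)] .
  then have "k \<odot> sem = beh"
    using final(2)[OF gamma] assms(13) by blast
  moreover have "k \<in> hom C X (nu mu)"
    using k unfolding coalg_hom_def by blast
  ultimately show ?thesis
    by blast
qed

end
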